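(* Let $(G,u)$ be a unital po-group satisfying RIP such that the pseudo effect algebra $E=\Gamma(G,u)$ satisfies RDP (respectively RDP$_1$). Let $m,n\ge1$ and suppose $a_1+\cdots+a_m=b_1+\cdots+b_n$ in $G$, where $a_1,\ldots,a_{m-1},b_1,\ldots,b_{n-1}\in E$ and $a_m,b_n\in G^+$. Then for $\{a_i\}$ and $\{b_j\}$ the $(m,n)$-RDP (respectively the $(m,n)$-RDP$_1$) holds in $G$, i.e. there are $c_{ij}\in G^+$ ($1\le i\le m$, $1\le j\le n$) with $a_i=\sum_{j=1}^n c_{ij}$ and $b_j=\sum_{i=1}^m c_{ij}$ for all $i,j$ (and, in the RDP$_1$ case, additionally $c_{i+1,j}+\cdots+c_{mj}\ \mathbf{com}\ c_{i,j+1}+\cdots+c_{in}$ for all $1\le i<m$, $1\le j<n$).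
   Context: A po-group is a (not necessarily Abelian, additively written) group with a partial order $\le$ such that $a\le b$ implies $x+a+y\le x+b+y$; $G^+$ is its positive cone. A unital po-group $(G,u)$ is a po-group with a strong unit $u\in G^+$ (for each $g\in G$ there is $k\ge1$ with $g\le ku$). $\Gamma(G,u)=\{g\in G:0\le g\le u\}$ is a pseudo effect algebra with constants $0,u$ and partial addition: $a+b$ is defined (equal to the group sum) iff $a+b\le u$. RIP: whenever $a_i\le b_j$ for all $i,j\in\{1,2\}$, there is $c$ with $a_i\le c\le b_j$ for all $i,j$. For $a,b\in G^+$, $a\ \mathbf{com}\ b$ means $x+y=y+x$ for all $0\le x\le a$, $0\le y\le b$. RDP for a pseudo effect algebra $E$: whenever $a_1+a_2=b_1+b_2$ in $E$, there are $c_{11},c_{12},c_{21},c_{22}\in E$ with $a_1=c_{11}+c_{12}$, $a_2=c_{21}+c_{22}$, $b_1=c_{11}+c_{21}$, $b_2=c_{12}+c_{22}$ (all sums defined); RDP$_1$ additionally requires that $x\le c_{12}$, $y\le c_{21}$ in $E$ imply $x+y=y+x$. *)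

theory Defs
  imports Main
begin

definition po_group :: "'a::{group_add,order} itself \<Rightarrow> bool" where
  "po_group _ \<longleftrightarrow> (\<forall>a b x y :: 'a. a \<le> b \<longrightarrow> x + a + y \<le> x + b + y)"

definition nsum :: "nat \<Rightarrow> 'a::monoid_add \<Rightarrow> 'a" where
  "nsum k u = sum_list (replicate k u)"

definition strong_unit :: "'a::{group_add,order} \<Rightarrow> bool" where
  "strong_unit u \<longleftrightarrow> 0 \<le> u \<and> (\<forall>g. \<exists>k\<ge>1. g \<le> nsum k u)"

definition Gamma :: "'a::{group_add,order} \<Rightarrow> 'a set" where
  "Gamma u = {g. 0 \<le> g \<and> g \<le> u}"

definition RIP :: "'a::{group_add,order} itself \<Rightarrow> bool" where
  "RIP _ \<longleftrightarrow> (\<forall>a1 a2 b1 b2 :: 'a.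
      a1 \<le> b1 \<and> a1 \<le> b2 \<and> a2 \<le> b1 \<and> a2 \<le> b2 \<longrightarrow>
      (\<exists>c. a1 \<le> c \<and> a2 \<le> c \<and> c \<le> b1 \<and> c \<le> b2))"

definition com :: "'a::{group_add,order} \<Rightarrow> 'a \<Rightarrow> bool" where
  "com a b \<longleftrightarrow> (\<forall>x y. 0 \<le> x \<and> x \<le> a \<and> 0 \<le> y \<and> y \<le> b \<longrightarrow> x + y = y + x)"

text \<open>Partial addition of Gamma(G,u): a+b defined iff a+b \<le> u.\<close>
definition defd :: "'a::{group_add,order} \<Rightarrow> 'a \<Rightarrow> 'a \<Rightarrow> bool" where
  "defd u a b \<longleftrightarrow> a \<in> Gamma u \<and> b \<in> Gamma u \<and> a + b \<le> u"

definition RDP_Gamma :: "'a::{group_add,order} \<Rightarrow> bool" where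
  "RDP_Gamma u \<longleftrightarrow> (\<forall>a1 a2 b1 b2.
     defd u a1 a2 \<and> defd u b1 b2 \<and> a1 + a2 = b1 + b2 \<longrightarrow>
     (\<exists>c11 c12 c21 c22.
        defd u c11 c12 \<and> defd u c21 c22 \<and> defd u c11 c21 \<and> defd u c12 c22 \<and>
        a1 = c11 + c12 \<and> a2 = c21 + c22 \<and> b1 = c11 + c21 \<and> b2 = c12 + c22))"

definition RDP1_Gamma :: "'a::{group_add,order} \<Rightarrow> bool" where
  "RDP1_Gamma u \<longleftrightarrow> (\<forall>a1 a2 b1 b2.
     defd u a1 a2 \<and> defd u b1 b2 \<and> a1 + a2 = b1 + b2 \<longrightarrow>
     (\<exists>c11 c12 c21 c22.
        defd u c11 c12 \<and> defd u c21 c22 \<and> defd u c11 c21 \<and> defd u c12 c22 \<and>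
        a1 = c11 + c12 \<and> a2 = c21 + c22 \<and> b1 = c11 + c21 \<and> b2 = c12 + c22 \<and>
        (\<forall>x\<in>Gamma u. \<forall>y\<in>Gamma u. x \<le> c12 \<and> y \<le> c21 \<longrightarrow> x + y = y + x)))"

end

(*
  An (m,n) equation is refined one row at a time: writing it as
  a_1 + (a_2 + ... + a_m) = b_1 + ... + b_n gives a (2,n) problem, and the second row of
  its solution is the right-hand side of an (m-1,n) problem for a_2, ..., a_m.  The (2,n)
  case is the transpose of an (n,2) case, which the same row recursion obtains from the
  (2,2) case.  For (2,2), with a_1, b_1 in Gamma(G,u) and a_2, b_2 positive, RIP gives p with
  0 <= p <= a_2, b_2 and a_1 + a_2 - p <= u, so a_1 + (a_2 - p) = b_1 + (b_2 - p) is an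
  equation in the pseudo effect algebra; decompose it there and add p back to the corner.
  The extra RDP_1 condition survives every step, because each tail sum of the assembled
  matrix is an off-diagonal entry of one of the 2x2 decompositions.
*)

theory Submission
  imports Defs
begin

lemma po_group_add_left_mono:
  fixes a b x :: "'a::{group_add,order}"
  assumes "po_group TYPE('a)" and "a \<le> b"
  shows "x + a \<le> x + b"
  using assms unfolding po_group_def by (metis add_0_right)

lemma po_group_add_right_mono:
  fixes a b y :: "'a::{group_add,order}"
  assumes "po_group TYPE('a)" and "a \<le> b"
  shows "a + y \<le> b + y"
  using assms unfolding po_group_def by (metis add_0_left)

lemma po_group_add_nonneg:
  fixes x y :: "'a::{group_add,order}"
  assumes po: "po_group TYPE('a)" and "0 \<le> x" and "0 \<le> y"
  shows "0 \<le> x + y"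
  using po_group_add_left_mono[OF po \<open>0 \<le> y\<close>, of x] \<open>0 \<le> x\<close> by simp

lemma po_group_add_increasing:
  fixes x y :: "'a::{group_add,order}"
  assumes "po_group TYPE('a)" and "0 \<le> x"
  shows "y \<le> x + y"
  using po_group_add_right_mono[OF assms, of y] by simp

lemma po_group_sum_list_nonneg:
  fixes xs :: "'a::{group_add,order} list"
  assumes "po_group TYPE('a)" and "\<forall>x\<in>set xs. 0 \<le> x"
  shows "0 \<le> sum_list xs"
  using assms(2) by (induction xs) (auto intro: po_group_add_nonneg[OF assms(1)])

lemma sum_list_map_upt_Suc:
  "sum_list (map g [Suc i..<Suc k]) = sum_list (map (\<lambda>x. g (Suc x)) [i..<k])"
  by (simp add: map_Suc_upt[symmetric] comp_def del: upt_Suc)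

lemma sum_list_map_upt_0_Suc:
  "sum_list (map g [0..<Suc k]) = g 0 + sum_list (map (\<lambda>x. g (Suc x)) [0..<k])"
  by (simp add: upt_conv_Cons sum_list_map_upt_Suc del: upt_Suc)

definition Gamma_but_last :: "'a::{group_add,order} \<Rightarrow> nat \<Rightarrow> (nat \<Rightarrow> 'a) \<Rightarrow> bool" where
  "Gamma_but_last u m a \<longleftrightarrow> (\<forall>i<m - 1. a i \<in> Gamma u) \<and> 0 \<le> a (m - 1)"

lemma Gamma_but_last_nonneg:
  assumes "Gamma_but_last u m a" and "i < m"
  shows "0 \<le> a i"
  using assms unfolding Gamma_but_last_def Gamma_def
  by (cases "i < m - 1") (auto simp: not_less dest: le_antisym)

definition refinement_matrix ::
    "nat \<Rightarrow> nat \<Rightarrow> (nat \<Rightarrow> 'a::{group_add,order}) \<Rightarrow> (nat \<Rightarrow> 'a) \<Rightarrow> (nat \<Rightarrow> nat \<Rightarrow> 'a) \<Rightarrow> bool" where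
  "refinement_matrix m n a b c \<longleftrightarrow>
     (\<forall>i<m. \<forall>j<n. 0 \<le> c i j) \<and>
     (\<forall>i<m. a i = sum_list (map (c i) [0..<n])) \<and>
     (\<forall>j<n. b j = sum_list (map (\<lambda>i. c i j) [0..<m]))"

definition tails_satisfy :: "('a::monoid_add \<Rightarrow> 'a \<Rightarrow> bool) \<Rightarrow> nat \<Rightarrow> nat \<Rightarrow> (nat \<Rightarrow> nat \<Rightarrow> 'a) \<Rightarrow> bool" where
  "tails_satisfy P m n c \<longleftrightarrow>
     (\<forall>i<m - 1. \<forall>j<n - 1.
        P (sum_list (map (\<lambda>k. c k j) [Suc i..<m])) (sum_list (map (c i) [Suc j..<n])))"

definition refinable :: "'a::{group_add,order} \<Rightarrow> ('a \<Rightarrow> 'a \<Rightarrow> bool) \<Rightarrow> nat \<Rightarrow> nat \<Rightarrow> bool" where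
  "refinable u P m n \<longleftrightarrow>
     (\<forall>a b. Gamma_but_last u m a \<longrightarrow> Gamma_but_last u n b \<longrightarrow>
        sum_list (map a [0..<m]) = sum_list (map b [0..<n]) \<longrightarrow>
        (\<exists>c. refinement_matrix m n a b c \<and> tails_satisfy P m n c))"

lemma refinement_matrix_transpose:
  "refinement_matrix n m b a (\<lambda>i j. c j i) \<longleftrightarrow> refinement_matrix m n a b c"
  unfolding refinement_matrix_def by auto

lemma tails_satisfy_transpose:
  "tails_satisfy (\<lambda>x y. P y x) n m (\<lambda>i j. c j i) \<longleftrightarrow> tails_satisfy P m n c"
  unfolding tails_satisfy_def by auto

lemma refinable_transpose:
  assumes "refinable u P m n"
  shows "refinable u (\<lambda>x y. P y x) n m"
  unfolding refinable_def
proof (intro allI impI)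
  fix a b assume "Gamma_but_last u n a" "Gamma_but_last u m b"
    and "sum_list (map a [0..<n]) = sum_list (map b [0..<m])"
  then obtain c where "refinement_matrix m n b a c" "tails_satisfy P m n c"
    using assms unfolding refinable_def by metis
  then show "\<exists>c. refinement_matrix n m a b c \<and> tails_satisfy (\<lambda>x y. P y x) n m c"
    by (metis refinement_matrix_transpose tails_satisfy_transpose)
qed

lemma refinable_1_left: "refinable u P 1 n"
  unfolding refinable_def
proof (intro allI impI)
  fix a b assume "Gamma_but_last u n b" and "sum_list (map a [0..<1]) = sum_list (map b [0..<n])"
  then have "refinement_matrix 1 n a b (\<lambda>_. b)"
    unfolding refinement_matrix_def by (auto intro: Gamma_but_last_nonneg)
  moreover have "tails_satisfy P 1 n (\<lambda>_. b)"
    unfolding tails_satisfy_def by simp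
  ultimately show "\<exists>c. refinement_matrix 1 n a b c \<and> tails_satisfy P 1 n c" by blast
qed

lemma refinement_matrix_prepend_row:
  assumes "\<forall>j<n. 0 \<le> r j" and "a 0 = sum_list (map r [0..<n])"
    and "refinement_matrix m n (\<lambda>i. a (Suc i)) d f" and "\<forall>j<n. b j = r j + d j"
  shows "refinement_matrix (Suc m) n a b (case_nat r f)"
  using assms unfolding refinement_matrix_def
  by (auto simp: sum_list_map_upt_0_Suc less_Suc_eq_0_disj simp del: upt_Suc)

lemma tails_satisfy_prepend_row:
  assumes "tails_satisfy P m n f"
    and "\<forall>j<n - 1. P (sum_list (map (\<lambda>k. f k j) [0..<m])) (sum_list (map r [Suc j..<n]))"
  shows "tails_satisfy P (Suc m) n (case_nat r f)"
  unfolding tails_satisfy_def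
proof (intro allI impI)
  fix i j assume "i < Suc m - 1" and "j < n - 1"
  then show "P (sum_list (map (\<lambda>k. case_nat r f k j) [Suc i..<Suc m]))
      (sum_list (map (case_nat r f i) [Suc j..<n]))"
    using assms unfolding tails_satisfy_def
    by (cases i) (auto simp: sum_list_map_upt_Suc simp del: upt_Suc)
qed

lemma Gamma_but_last_second_row:
  fixes u :: "'a::{group_add,order}"
  assumes po: "po_group TYPE('a)" and d: "refinement_matrix 2 n a b d"
    and b: "Gamma_but_last u n b" and "n \<ge> 1"
  shows "Gamma_but_last u n (d 1)"
proof -
  have "d 1 j \<le> u" if "j < n - 1" for j
  proof -
    have "d 1 j \<le> d 0 j + d 1 j"
      using d that by (intro po_group_add_increasing[OF po]) (simp add: refinement_matrix_def)
    also have "\<dots> = b j" using d that by (simp add: refinement_matrix_def eval_nat_numeral)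
    also have "\<dots> \<le> u" using b that by (simp add: Gamma_but_last_def Gamma_def)
    finally show ?thesis .
  qed
  then show ?thesis
    using d \<open>n \<ge> 1\<close> by (simp add: Gamma_but_last_def Gamma_def refinement_matrix_def)
qed

lemma refinable_Suc_rows:
  fixes u :: "'a::{group_add,order}"
  assumes po: "po_group TYPE('a)" and "n \<ge> 1" and "m \<ge> 1"
    and two_rows: "refinable u P 2 n" and m_rows: "refinable u P m n"
  shows "refinable u P (Suc m) n"
  unfolding refinable_def
proof (intro allI impI)
  fix a b assume a: "Gamma_but_last u (Suc m) a" and b: "Gamma_but_last u n b"
    and sums: "sum_list (map a [0..<Suc m]) = sum_list (map b [0..<n])"
  define rest where "rest = sum_list (map (\<lambda>i. a (Suc i)) [0..<m])"
  have "0 \<le> rest"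
    unfolding rest_def using Gamma_but_last_nonneg[OF a]
    by (auto intro!: po_group_sum_list_nonneg[OF po])
  then have "Gamma_but_last u 2 (\<lambda>i. if i = 0 then a 0 else rest)"
    using a \<open>m \<ge> 1\<close> by (auto simp: Gamma_but_last_def)
  moreover have "sum_list (map (\<lambda>i. if i = 0 then a 0 else rest) [0..<2]) = sum_list (map b [0..<n])"
    using sums by (simp add: rest_def sum_list_map_upt_0_Suc eval_nat_numeral del: upt_Suc)
  ultimately obtain d where d: "refinement_matrix 2 n (\<lambda>i. if i = 0 then a 0 else rest) b d"
      and d_tails: "tails_satisfy P 2 n d"
    using two_rows b unfolding refinable_def by blast
  have "\<forall>i<2. (if i = 0 then a 0 else rest) = sum_list (map (d i) [0..<n])"
    using d by (simp add: refinement_matrix_def)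
  from this[rule_format, of 0] this[rule_format, of 1]
  have a_0_row: "a 0 = sum_list (map (d 0) [0..<n])" and rest_row: "rest = sum_list (map (d 1) [0..<n])"
    by simp_all
  have b_split: "b j = d 0 j + d 1 j" and d_nonneg: "0 \<le> d 0 j" if "j < n" for j
    using d that by (simp_all add: refinement_matrix_def eval_nat_numeral)
  have "Gamma_but_last u m (\<lambda>i. a (Suc i))"
    using a \<open>m \<ge> 1\<close> by (auto simp: Gamma_but_last_def)
  moreover have "Gamma_but_last u n (d 1)"
    by (rule Gamma_but_last_second_row[OF po d b \<open>n \<ge> 1\<close>])
  moreover have "sum_list (map (\<lambda>i. a (Suc i)) [0..<m]) = sum_list (map (d 1) [0..<n])"
    using rest_row by (simp add: rest_def)
  ultimately obtain f where f: "refinement_matrix m n (\<lambda>i. a (Suc i)) (d 1) f"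
      and f_tails: "tails_satisfy P m n f"
    using m_rows unfolding refinable_def by blast
  have "refinement_matrix (Suc m) n a b (case_nat (d 0) f)"
    by (rule refinement_matrix_prepend_row[OF _ _ f]) (use a_0_row b_split d_nonneg in simp_all)
  moreover have "tails_satisfy P (Suc m) n (case_nat (d 0) f)"
  proof (rule tails_satisfy_prepend_row[OF f_tails], intro allI impI)
    fix j assume "j < n - 1"
    then have "P (d 1 j) (sum_list (map (d 0) [Suc j..<n]))"
      using d_tails by (simp add: tails_satisfy_def numeral_2_eq_2)
    moreover have "d 1 j = sum_list (map (\<lambda>k. f k j) [0..<m])"
      using f \<open>j < n - 1\<close> by (simp add: refinement_matrix_def)
    ultimately show "P (sum_list (map (\<lambda>k. f k j) [0..<m])) (sum_list (map (d 0) [Suc j..<n]))"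
      by simp
  qed
  ultimately show "\<exists>c. refinement_matrix (Suc m) n a b c \<and> tails_satisfy P (Suc m) n c"
    by blast
qed

lemma refinable_rows:
  fixes u :: "'a::{group_add,order}"
  assumes po: "po_group TYPE('a)" and "n \<ge> 1" and "refinable u P 2 n" and "m \<ge> 1"
  shows "refinable u P m n"
  using \<open>m \<ge> 1\<close>
proof (induction m rule: nat_induct_at_least)
  case base
  show ?case by (rule refinable_1_left)
next
  case (Suc m)
  then show ?case using refinable_Suc_rows[OF po \<open>n \<ge> 1\<close>] assms(3) by blast
qed

lemma refinable_of_refinable_2_2:
  fixes u :: "'a::{group_add,order}"
  assumes po: "po_group TYPE('a)" and "refinable u P 2 2" and "m \<ge> 1" and "n \<ge> 1"
  shows "refinable u P m n"
proof -
  have "refinable u (\<lambda>x y. P y x) n 2"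
    using refinable_rows[OF po _ refinable_transpose[OF assms(2)] \<open>n \<ge> 1\<close>] by simp
  then have "refinable u P 2 n"
    using refinable_transpose by fastforce
  then show ?thesis
    using refinable_rows[OF po \<open>n \<ge> 1\<close> _ \<open>m \<ge> 1\<close>] by blast
qed

definition RDP_Gamma_rel :: "'a::{group_add,order} \<Rightarrow> ('a \<Rightarrow> 'a \<Rightarrow> bool) \<Rightarrow> bool" where
  "RDP_Gamma_rel u P \<longleftrightarrow> (\<forall>a1 a2 b1 b2.
     defd u a1 a2 \<and> defd u b1 b2 \<and> a1 + a2 = b1 + b2 \<longrightarrow>
     (\<exists>c11 c12 c21 c22.
        defd u c11 c12 \<and> defd u c21 c22 \<and> defd u c11 c21 \<and> defd u c12 c22 \<and>
        a1 = c11 + c12 \<and> a2 = c21 + c22 \<and> b1 = c11 + c21 \<and> b2 = c12 + c22 \<and> P c21 c12))"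

lemma RDP_Gamma_rel_True_iff: "RDP_Gamma_rel u (\<lambda>_ _. True) \<longleftrightarrow> RDP_Gamma u"
  unfolding RDP_Gamma_rel_def RDP_Gamma_def by simp

lemma RDP_Gamma_rel_mono:
  assumes "RDP_Gamma_rel u P" and "\<And>x y. x \<in> Gamma u \<Longrightarrow> y \<in> Gamma u \<Longrightarrow> P x y \<Longrightarrow> Q x y"
  shows "RDP_Gamma_rel u Q"
  using assms unfolding RDP_Gamma_rel_def defd_def by (metis (no_types, lifting))

lemma RDP1_Gamma_iff_RDP_Gamma_rel:
  "RDP1_Gamma u \<longleftrightarrow>
     RDP_Gamma_rel u (\<lambda>c21 c12. \<forall>x\<in>Gamma u. \<forall>y\<in>Gamma u. x \<le> c12 \<and> y \<le> c21 \<longrightarrow> x + y = y + x)"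
  unfolding RDP1_Gamma_def RDP_Gamma_rel_def by simp

lemma com_if_commute_in_Gamma:
  assumes "a \<in> Gamma u" and "b \<in> Gamma u"
    and "\<forall>x\<in>Gamma u. \<forall>y\<in>Gamma u. x \<le> b \<and> y \<le> a \<longrightarrow> x + y = y + x"
  shows "com a b"
  unfolding com_def
proof (intro allI impI)
  fix x y assume xy: "0 \<le> x \<and> x \<le> a \<and> 0 \<le> y \<and> y \<le> b"
  then have "x \<in> Gamma u" "y \<in> Gamma u"
    using assms(1,2) by (auto simp: Gamma_def intro: order_trans)
  then show "x + y = y + x" using assms(3) xy by metis
qed

lemma RDP1_Gamma_imp_RDP_Gamma_rel_com:
  assumes "RDP1_Gamma u"
  shows "RDP_Gamma_rel u com"
  using assms unfolding RDP1_Gamma_iff_RDP_Gamma_rel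
  by (rule RDP_Gamma_rel_mono) (rule com_if_commute_in_Gamma)

lemma RIP_common_part:
  fixes u a1 a2 b1 b2 :: "'a::{group_add,order}"
  assumes po: "po_group TYPE('a)" and rip: "RIP TYPE('a)"
    and "a1 \<le> u" and "b1 \<le> u" and "0 \<le> a2" and "0 \<le> b2" and eq: "a1 + a2 = b1 + b2"
  shows "\<exists>p. 0 \<le> p \<and> p \<le> a2 \<and> p \<le> b2 \<and> a1 + a2 - p \<le> u"
proof -
  have below: "-u + (x + y) \<le> y" if "x \<le> u" for x y
  proof -
    have "-u + x \<le> 0" using po_group_add_left_mono[OF po that, of "-u"] by simp
    then show ?thesis using po_group_add_right_mono[OF po, of "-u + x" 0 y] by (simp add: add.assoc)
  qed
  have "-u + (a1 + a2) \<le> a2" "-u + (a1 + a2) \<le> b2"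
    using below[OF \<open>a1 \<le> u\<close>, of a2] below[OF \<open>b1 \<le> u\<close>, of b2] by (simp_all only: eq)
  then obtain p where p: "0 \<le> p" "-u + (a1 + a2) \<le> p" "p \<le> a2" "p \<le> b2"
    using rip \<open>0 \<le> a2\<close> \<open>0 \<le> b2\<close> unfolding RIP_def by blast
  have "a1 + a2 \<le> u + p"
    using po_group_add_left_mono[OF po p(2), of u] by (simp add: add.assoc[symmetric])
  then have "a1 + a2 - p \<le> u"
    using po_group_add_right_mono[OF po, of "a1 + a2" "u + p" "-p"] by (simp add: add.assoc)
  with p show ?thesis by blast
qed

lemma po_group_defd_diff:
  fixes u x y p :: "'a::{group_add,order}"
  assumes po: "po_group TYPE('a)" and "x \<in> Gamma u" and "p \<le> y" and "x + y - p \<le> u"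
  shows "defd u x (y - p)"
proof -
  have "0 \<le> y - p"
    using po_group_add_right_mono[OF po \<open>p \<le> y\<close>, of "-p"] by simp
  moreover have "y - p \<le> x + (y - p)"
    using po_group_add_increasing[OF po] \<open>x \<in> Gamma u\<close> by (simp add: Gamma_def)
  ultimately show ?thesis
    using assms(2,4) by (auto simp: defd_def Gamma_def add_diff_eq)
qed

lemma refinement_matrix_2_2:
  "refinement_matrix 2 2 a b c \<longleftrightarrow>
     0 \<le> c 0 0 \<and> 0 \<le> c 0 1 \<and> 0 \<le> c 1 0 \<and> 0 \<le> c 1 1 \<and>
     a 0 = c 0 0 + c 0 1 \<and> a 1 = c 1 0 + c 1 1 \<and> b 0 = c 0 0 + c 1 0 \<and> b 1 = c 0 1 + c 1 1"
  by (simp add: refinement_matrix_def numeral_2_eq_2 All_less_Suc2)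

lemma tails_satisfy_2_2: "tails_satisfy P 2 2 c \<longleftrightarrow> P (c 1 0) (c 0 1)"
  by (simp add: tails_satisfy_def numeral_2_eq_2)

lemma refinable_2_2:
  fixes u :: "'a::{group_add,order}"
  assumes po: "po_group TYPE('a)" and rip: "RIP TYPE('a)" and rdp: "RDP_Gamma_rel u P"
  shows "refinable u P 2 2"
  unfolding refinable_def
proof (intro allI impI)
  fix a b assume "Gamma_but_last u 2 a" "Gamma_but_last u 2 b"
    and "sum_list (map a [0..<2]) = sum_list (map b [0..<2])"
  then have a0: "a 0 \<in> Gamma u" and "0 \<le> a 1" and b0: "b 0 \<in> Gamma u" and "0 \<le> b 1"
    and eq: "a 0 + a 1 = b 0 + b 1"
    by (simp_all add: Gamma_but_last_def numeral_2_eq_2)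
  obtain p where p: "0 \<le> p" "p \<le> a 1" "p \<le> b 1" "a 0 + a 1 - p \<le> u"
    using RIP_common_part[OF po rip _ _ \<open>0 \<le> a 1\<close> \<open>0 \<le> b 1\<close> eq] a0 b0 by (auto simp: Gamma_def)
  have "defd u (a 0) (a 1 - p)"
    by (rule po_group_defd_diff[OF po a0 p(2,4)])
  moreover have "defd u (b 0) (b 1 - p)"
    by (rule po_group_defd_diff[OF po b0 p(3)]) (use p(4) in \<open>simp only: eq\<close>)
  moreover have "a 0 + (a 1 - p) = b 0 + (b 1 - p)"
    by (simp only: add_diff_eq eq)
  ultimately obtain d11 d12 d21 d22 where d: "defd u d11 d12" "defd u d21 d22" "defd u d11 d21"
      "a 0 = d11 + d12" "a 1 - p = d21 + d22" "b 0 = d11 + d21" "b 1 - p = d12 + d22" "P d21 d12"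
    using rdp unfolding RDP_Gamma_rel_def by blast
  \<comment> \<open>the part \<open>p\<close> removed by RIP is added back to the corner entry\<close>
  define c :: "nat \<Rightarrow> nat \<Rightarrow> 'a" where
    "c = (\<lambda>i j. if i = 0 then (if j = 0 then d11 else d12) else (if j = 0 then d21 else d22 + p))"
  have "a 1 = d21 + (d22 + p)" "b 1 = d12 + (d22 + p)"
    by (metis d(5,7) diff_add_cancel add.assoc)+
  moreover have "0 \<le> d22 + p"
    using po_group_add_nonneg[OF po _ p(1)] d(2) by (simp add: defd_def Gamma_def)
  ultimately have "refinement_matrix 2 2 a b c \<and> tails_satisfy P 2 2 c"
    using d by (simp add: refinement_matrix_2_2 tails_satisfy_2_2 c_def defd_def Gamma_def)
  then show "\<exists>c. refinement_matrix 2 2 a b c \<and> tails_satisfy P 2 2 c" by blast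
qed

theorem proposition3p5:
  fixes u :: "'a::{group_add,order}"
    and a b :: "nat \<Rightarrow> 'a" and m n :: nat
  assumes "po_group TYPE('a)" and "strong_unit u" and "RIP TYPE('a)"
    and "m \<ge> 1" and "n \<ge> 1"
    and "sum_list (map a [0..<m]) = sum_list (map b [0..<n])"
    and "\<forall>i < m - 1. a i \<in> Gamma u" and "\<forall>j < n - 1. b j \<in> Gamma u"
    and "0 \<le> a (m - 1)" and "0 \<le> b (n - 1)"
  shows "(RDP_Gamma u \<longrightarrow>
           (\<exists>c :: nat \<Rightarrow> nat \<Rightarrow> 'a.
              (\<forall>i<m. \<forall>j<n. 0 \<le> c i j) \<and>
              (\<forall>i<m. a i = sum_list (map (c i) [0..<n])) \<and>
              (\<forall>j<n. b j = sum_list (map (\<lambda>i. c i j) [0..<m]))))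
       \<and> (RDP1_Gamma u \<longrightarrow>
           (\<exists>c :: nat \<Rightarrow> nat \<Rightarrow> 'a.
              (\<forall>i<m. \<forall>j<n. 0 \<le> c i j) \<and>
              (\<forall>i<m. a i = sum_list (map (c i) [0..<n])) \<and>
              (\<forall>j<n. b j = sum_list (map (\<lambda>i. c i j) [0..<m])) \<and>
              (\<forall>i < m - 1. \<forall>j < n - 1.
                 com (sum_list (map (\<lambda>k. c k j) [Suc i..<m]))
                     (sum_list (map (c i) [Suc j..<n])))))"
proof -
  have "Gamma_but_last u m a" "Gamma_but_last u n b"
    using assms(7-10) by (simp_all add: Gamma_but_last_def)
  then have refined: "\<exists>c. refinement_matrix m n a b c \<and> tails_satisfy P m n c"
    if "RDP_Gamma_rel u P" for P
    using refinable_of_refinable_2_2[OF assms(1) refinable_2_2[OF assms(1,3) that] assms(4,5)]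
      assms(6) unfolding refinable_def by blast
  show ?thesis
    using refined[of "\<lambda>_ _. True"] refined[of com] RDP1_Gamma_imp_RDP_Gamma_rel_com
    unfolding RDP_Gamma_rel_True_iff refinement_matrix_def tails_satisfy_def by blast
qed

end
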